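(* Let $L$ be a slim semimodular lattice of length $n$ and let $D$ be a planar diagram of $L$ with left boundary chain $0=c_0\prec\dots\prec c_n=1$ and right boundary chain $0=d_0\prec\dots\prec d_n=1$. Let $\pi_1,\pi_2,\pi_3$ be the permutations associated with $D$ as defined below. Then $\pi_1=\pi_2=\pi_3$.
   Context: A finite lattice is slim if its join-irreducible elements (including $0$) contain no three-element antichain; semimodular means $a\prec b$ implies $a\vee c\preceq b\vee c$. Slim lattices are planar; in a planar diagram of a slim semimodular lattice all cells (minimal regions bounded by edges) are 4-cells, i.e. four-element cover-preserving sublattices of length 2. Diagrams are considered up to boundary similarity (an isomorphism preserving left and right boundary chains). $\pi_1$: for $i\in\{1,\dots,n\}$ let $I_0=[c_{i-1},c_i]$; if $I_t$ is defined and is the left-hand (lower or upper) edge of a 4-cell lying to its right, let $I_{t+1}$ be the opposite edge of that 4-cell; the sequence $I_0,\dots,I_m$ (the trajectory) ends on the right boundary chain at $I_m=[d_{j-1},d_j]$, and $\pi_1(i)=j$ (this is known to be well defined and a permutation). $\pi_2$: for $i\in\{1,\dots,n\}$ take a meet-irreducible $u\in L$, $u\neq1$, such that $c_i$ is the smallest element of the left boundary chain not $\le u$; let $d_j$ be the smallest element of the right boundary chain not $\le u$; $\pi_2(i)=j$. $\pi_3$: let $G$ be the direct product of the chains $\{c_0,\dots,c_n\}$ and $\{d_0,\dots,d_n\}$, writing $c_i\vee d_j$ for the pair $(c_i,d_j)$; let $\eta\colon G\to L$, $c_i\vee_G d_j\mapsto c_i\vee_L d_j$, and let $\beta_D$ be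 the kernel of $\eta$. For a join-congruence $\alpha$ of $G$ and $i,j\ge1$, the 4-cell $\{c_{i-1}\vee d_{j-1},c_{i-1}\vee d_j,c_i\vee d_{j-1},c_i\vee d_j\}$ is a source cell of $\alpha$ if $c_{i-1}\vee d_j$, $c_i\vee d_{j-1}$, $c_i\vee d_j$ lie in one $\alpha$-class not containing $c_{i-1}\vee d_{j-1}$. $\pi_3(i)=j$ iff the 4-cell with top $c_i\vee d_j$ is a source cell of $\beta_D$. *)

theory Defs
  imports Main
begin

text \<open>The lattice L is the whole (finite, hence bounded) type 'a.\<close>

definition covers :: "'a::order \<Rightarrow> 'a \<Rightarrow> bool" where
  "covers x y \<longleftrightarrow> x < y \<and> \<not> (\<exists>z. x < z \<and> z < y)"

definition covers_or_eq :: "'a::order \<Rightarrow> 'a \<Rightarrow> bool" where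
  "covers_or_eq x y \<longleftrightarrow> covers x y \<or> x = y"

text \<open>Join-irreducible elements, with 0 included (as in the slimness definition).\<close>
definition join_irreducible :: "'a::lattice \<Rightarrow> bool" where
  "join_irreducible x \<longleftrightarrow> (\<forall>a b. x = sup a b \<longrightarrow> x = a \<or> x = b)"

definition meet_irreducible :: "'a::lattice \<Rightarrow> bool" where
  "meet_irreducible x \<longleftrightarrow> (\<forall>a b. x = inf a b \<longrightarrow> x = a \<or> x = b)"

definition slim_lattice :: "'a::lattice itself \<Rightarrow> bool" where
  "slim_lattice _ \<longleftrightarrow> \<not> (\<exists>x y z :: 'a. join_irreducible x \<and> join_irreducible y \<and> join_irreducible z
      \<and> \<not> x \<le> y \<and> \<not> y \<le> x \<and> \<not> x \<le> z \<and> \<not> z \<le> x \<and> \<not> y \<le> z \<and> \<not> z \<le> y)"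

definition semimodular_lattice :: "'a::lattice itself \<Rightarrow> bool" where
  "semimodular_lattice _ \<longleftrightarrow> (\<forall>a b c :: 'a. covers a b \<longrightarrow> covers_or_eq (sup a c) (sup b c))"

definition is_chain :: "'a::order set \<Rightarrow> bool" where
  "is_chain C \<longleftrightarrow> (\<forall>x\<in>C. \<forall>y\<in>C. x \<le> y \<or> y \<le> x)"

definition lattice_length :: "'a::{finite,order} itself \<Rightarrow> nat \<Rightarrow> bool" where
  "lattice_length _ n \<longleftrightarrow> (\<exists>C :: 'a set. is_chain C \<and> card C = n + 1)
      \<and> (\<forall>C :: 'a set. is_chain C \<longrightarrow> card C \<le> n + 1)"

text \<open>A planar diagram, up to similarity, is encoded by its two conjugate linear orders
  (a 2-dimensional realizer, Kelly--Rival / Baker--Fishburn--Roberts):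
  r1, r2 are linear orders whose intersection is the lattice order.
  x is strictly to the left of y iff x comes before y in r1 and after y in r2.\<close>
definition linear_rel :: "('a \<Rightarrow> 'a \<Rightarrow> bool) \<Rightarrow> bool" where
  "linear_rel r \<longleftrightarrow> (\<forall>x. r x x) \<and> (\<forall>x y. r x y \<and> r y x \<longrightarrow> x = y)
      \<and> (\<forall>x y z. r x y \<and> r y z \<longrightarrow> r x z) \<and> (\<forall>x y. r x y \<or> r y x)"

definition planar_diagram :: "('a::order \<Rightarrow> 'a \<Rightarrow> bool) \<Rightarrow> ('a \<Rightarrow> 'a \<Rightarrow> bool) \<Rightarrow> bool" where
  "planar_diagram r1 r2 \<longleftrightarrow> linear_rel r1 \<and> linear_rel r2 \<and> (\<forall>x y. x \<le> y \<longleftrightarrow> r1 x y \<and> r2 x y)"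

definition left_of :: "('a \<Rightarrow> 'a \<Rightarrow> bool) \<Rightarrow> ('a \<Rightarrow> 'a \<Rightarrow> bool) \<Rightarrow> 'a \<Rightarrow> 'a \<Rightarrow> bool" where
  "left_of r1 r2 x y \<longleftrightarrow> x \<noteq> y \<and> r1 x y \<and> r2 y x"

definition left_boundary_chain ::
  "('a::bounded_lattice \<Rightarrow> 'a \<Rightarrow> bool) \<Rightarrow> ('a \<Rightarrow> 'a \<Rightarrow> bool) \<Rightarrow> nat \<Rightarrow> (nat \<Rightarrow> 'a) \<Rightarrow> bool" where
  "left_boundary_chain r1 r2 n c \<longleftrightarrow> c 0 = bot \<and> c n = top \<and> (\<forall>i<n. covers (c i) (c (Suc i)))
      \<and> (\<forall>i\<le>n. \<forall>y. \<not> left_of r1 r2 y (c i))"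

definition right_boundary_chain ::
  "('a::bounded_lattice \<Rightarrow> 'a \<Rightarrow> bool) \<Rightarrow> ('a \<Rightarrow> 'a \<Rightarrow> bool) \<Rightarrow> nat \<Rightarrow> (nat \<Rightarrow> 'a) \<Rightarrow> bool" where
  "right_boundary_chain r1 r2 n d \<longleftrightarrow> d 0 = bot \<and> d n = top \<and> (\<forall>i<n. covers (d i) (d (Suc i)))
      \<and> (\<forall>i\<le>n. \<forall>y. \<not> left_of r1 r2 (d i) y)"

text \<open>A 4-cell of the diagram with bottom o, left middle a, right middle b, top t:
  a four-element cover-preserving sublattice of length 2 whose enclosed region contains
  no further element (an element strictly inside would lie in the open interval (o,t),
  right of a and left of b).\<close>
definition four_cell ::
  "('a::lattice \<Rightarrow> 'a \<Rightarrow> bool) \<Rightarrow> ('a \<Rightarrow> 'a \<Rightarrow> bool) \<Rightarrow> 'a \<Rightarrow> 'a \<Rightarrow> 'a \<Rightarrow> 'a \<Rightarrow> bool" where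
  "four_cell r1 r2 z a b t \<longleftrightarrow> covers z a \<and> covers a t \<and> covers z b \<and> covers b t
      \<and> left_of r1 r2 a b
      \<and> \<not> (\<exists>x. z < x \<and> x < t \<and> left_of r1 r2 a x \<and> left_of r1 r2 x b)"

definition traj_step ::
  "('a::lattice \<Rightarrow> 'a \<Rightarrow> bool) \<Rightarrow> ('a \<Rightarrow> 'a \<Rightarrow> bool) \<Rightarrow> 'a \<times> 'a \<Rightarrow> 'a \<times> 'a \<Rightarrow> bool" where
  "traj_step r1 r2 e e' \<longleftrightarrow> (\<exists>z a b t. four_cell r1 r2 z a b t \<and>
      ((e = (z, a) \<and> e' = (b, t)) \<or> (e = (a, t) \<and> e' = (z, b))))"

definition is_left_edge_of_cell ::
  "('a::lattice \<Rightarrow> 'a \<Rightarrow> bool) \<Rightarrow> ('a \<Rightarrow> 'a \<Rightarrow> bool) \<Rightarrow> 'a \<times> 'a \<Rightarrow> bool" where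
  "is_left_edge_of_cell r1 r2 e \<longleftrightarrow> (\<exists>z a b t. four_cell r1 r2 z a b t \<and> (e = (z, a) \<or> e = (a, t)))"

definition trajectory ::
  "('a::bounded_lattice \<Rightarrow> 'a \<Rightarrow> bool) \<Rightarrow> ('a \<Rightarrow> 'a \<Rightarrow> bool) \<Rightarrow> (nat \<Rightarrow> 'a) \<Rightarrow> nat \<Rightarrow> ('a \<times> 'a) list \<Rightarrow> bool" where
  "trajectory r1 r2 c i es \<longleftrightarrow> es \<noteq> [] \<and> hd es = (c (i - 1), c i)
      \<and> (\<forall>k. Suc k < length es \<longrightarrow> traj_step r1 r2 (es ! k) (es ! Suc k))
      \<and> \<not> is_left_edge_of_cell r1 r2 (last es)"

text \<open>The three permutations, given as their graphs (sets of pairs (i, pi(i))).\<close>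
definition pi1 ::
  "('a::bounded_lattice \<Rightarrow> 'a \<Rightarrow> bool) \<Rightarrow> ('a \<Rightarrow> 'a \<Rightarrow> bool) \<Rightarrow> nat \<Rightarrow> (nat \<Rightarrow> 'a) \<Rightarrow> (nat \<Rightarrow> 'a) \<Rightarrow> (nat \<times> nat) set" where
  "pi1 r1 r2 n c d = {(i, j). i \<in> {1..n} \<and> j \<in> {1..n} \<and>
      (\<exists>es. trajectory r1 r2 c i es \<and> last es = (d (j - 1), d j))}"

definition pi2 :: "nat \<Rightarrow> (nat \<Rightarrow> 'a::bounded_lattice) \<Rightarrow> (nat \<Rightarrow> 'a) \<Rightarrow> (nat \<times> nat) set" where
  "pi2 n c d = {(i, j). i \<in> {1..n} \<and> j \<in> {1..n} \<and>
      (\<exists>u. meet_irreducible u \<and> u \<noteq> top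
         \<and> \<not> c i \<le> u \<and> (\<forall>k\<le>n. \<not> c k \<le> u \<longrightarrow> c i \<le> c k)
         \<and> \<not> d j \<le> u \<and> (\<forall>k\<le>n. \<not> d k \<le> u \<longrightarrow> d j \<le> d k))}"

text \<open>eta (i,j) = c_i join d_j; beta_D is its kernel on the grid G = chain x chain.\<close>
definition beta_D :: "(nat \<Rightarrow> 'a::lattice) \<Rightarrow> (nat \<Rightarrow> 'a) \<Rightarrow> nat \<times> nat \<Rightarrow> nat \<times> nat \<Rightarrow> bool" where
  "beta_D c d p q \<longleftrightarrow> sup (c (fst p)) (d (snd p)) = sup (c (fst q)) (d (snd q))"

definition source_cell :: "(nat \<times> nat \<Rightarrow> nat \<times> nat \<Rightarrow> bool) \<Rightarrow> nat \<Rightarrow> nat \<Rightarrow> bool" where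
  "source_cell \<alpha> i j \<longleftrightarrow> \<alpha> (i - 1, j) (i, j) \<and> \<alpha> (i, j - 1) (i, j) \<and> \<not> \<alpha> (i - 1, j - 1) (i, j)"

definition pi3 :: "nat \<Rightarrow> (nat \<Rightarrow> 'a::bounded_lattice) \<Rightarrow> (nat \<Rightarrow> 'a) \<Rightarrow> (nat \<times> nat) set" where
  "pi3 n c d = {(i, j). i \<in> {1..n} \<and> j \<in> {1..n} \<and> source_cell (beta_D c d) i j}"

end

theory Submission
  imports Defs
begin

text \<open>
  Slimness forces every join-irreducible element onto one of the two boundary chains, so each
  x is the join of the largest c_i and the largest d_j below it; hence eta (i, j) = c_i \<squnion> d_j
  maps the grid onto L, and by semimodularity every grid edge is mapped to a cover or collapses.
  In row i, the first column j where the edge from (i - 1, j) to (i, j) collapses carries the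
  unique source cell of beta_D in that row.  The trajectory starting at [c_(i-1), c_i] is the
  image of the grid path running along row i up to this cell and then down its column to the
  right boundary edge [d_(j-1), d_j]; trajectories are determined by their first edge, so
  pi_1 (i) = j.  Finally eta (i - 1, j - 1) is meet-irreducible exactly below a source cell,
  and it is the element u in the definition of pi_2, so pi_2 = pi_3.
\<close>

section \<open>Covers in finite lattices\<close>

lemma covers_lt: "covers x y \<Longrightarrow> x < y"
  by (simp add: covers_def)

lemma covers_le: "covers x y \<Longrightarrow> x \<le> y"
  by (simp add: covers_def less_imp_le)

lemma covers_between:
  assumes "covers x y" "x \<le> z" "z \<le> y"
  shows "z = x \<or> z = y"
  using assms unfolding covers_def by (metis order.order_iff_strict)

lemma upper_covers_incomparable:
  assumes "covers z a" "covers z b" "a \<noteq> b"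
  shows "\<not> a \<le> b"
proof
  assume "a \<le> b"
  then have "a = z \<or> a = b"
    using covers_between[OF assms(2)] covers_lt[OF assms(1)] less_imp_le by blast
  then show False using assms(3) covers_lt[OF assms(1)] by blast
qed

lemma lower_covers_incomparable:
  assumes "covers a t" "covers b t" "a \<noteq> b"
  shows "\<not> a \<le> b"
proof
  assume "a \<le> b"
  then have "b = a \<or> b = t"
    using covers_between[OF assms(1)] covers_lt[OF assms(2)] less_imp_le by blast
  then show False using assms(3) covers_lt[OF assms(2)] by blast
qed

lemma ex_covers_le_of_less:
  fixes z x :: "'a::{finite,order}"
  assumes "z < x"
  shows "\<exists>y. covers z y \<and> y \<le> x"
proof -
  obtain m where "m \<in> {y. z < y \<and> y \<le> x}" and min: "\<forall>y \<in> {y. z < y \<and> y \<le> x}. y \<le> m \<longrightarrow> m = y"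
    using finite_has_minimal[of "{y. z < y \<and> y \<le> x}"] assms by auto
  then have "covers z m"
    unfolding covers_def by (metis (mono_tags) mem_Collect_eq order.strict_iff_not order.trans)
  then show ?thesis using \<open>m \<in> _\<close> by blast
qed

lemma ex_le_covers_of_less:
  fixes z x :: "'a::{finite,order}"
  assumes "z < x"
  shows "\<exists>y. z \<le> y \<and> covers y x"
proof -
  obtain m where "m \<in> {y. z \<le> y \<and> y < x}" and max: "\<forall>y \<in> {y. z \<le> y \<and> y < x}. m \<le> y \<longrightarrow> m = y"
    using finite_has_maximal[of "{y. z \<le> y \<and> y < x}"] assms by auto
  then have "covers m x"
    unfolding covers_def by (metis (mono_tags) mem_Collect_eq order.strict_iff_not order.trans)
  then show ?thesis using \<open>m \<in> _\<close> by blast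
qed

lemma upper_covers_inf_eq:
  fixes z :: "'a::lattice"
  assumes "covers z a" "covers z b" "a \<noteq> b"
  shows "inf a b = z"
proof -
  have "z \<le> inf a b" using covers_lt[OF assms(1)] covers_lt[OF assms(2)] by (simp add: less_imp_le)
  moreover have "inf a b \<noteq> a" using upper_covers_incomparable[OF assms] by (metis inf.orderI)
  ultimately show ?thesis using covers_between[OF assms(1), of "inf a b"] by simp
qed

lemma upper_covers_le:
  fixes z :: "'a::lattice"
  assumes "covers z a" "covers z b" "a \<noteq> b" "w \<le> a" "w \<le> b"
  shows "w \<le> z"
  using assms(4,5) upper_covers_inf_eq[OF assms(1-3)] by (metis le_inf_iff)

lemma lower_covers_sup_eq:
  fixes t :: "'a::lattice"
  assumes "covers a t" "covers b t" "a \<noteq> b"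
  shows "sup a b = t"
proof -
  have "sup a b \<le> t" using covers_lt[OF assms(1)] covers_lt[OF assms(2)] by (simp add: less_imp_le)
  moreover have "sup a b \<noteq> a" using lower_covers_incomparable[OF assms(2,1)] assms(3) by (metis sup.orderI)
  ultimately show ?thesis using covers_between[OF assms(1), of "sup a b"] by simp
qed

lemma ex_join_irreducible_le_not_le:
  fixes x y :: "'a::{finite,lattice}"
  assumes "\<not> x \<le> y"
  shows "\<exists>q. join_irreducible q \<and> q \<le> x \<and> \<not> q \<le> y"
proof -
  obtain m where m: "m \<le> x" "\<not> m \<le> y" and min: "\<And>b. b \<le> x \<Longrightarrow> \<not> b \<le> y \<Longrightarrow> b \<le> m \<Longrightarrow> m = b"
    using finite_has_minimal[of "{q. q \<le> x \<and> \<not> q \<le> y}"] assms by auto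
  have "join_irreducible m"
    unfolding join_irreducible_def
    by (metis m min le_sup_iff order.trans sup_ge1 sup_ge2)
  then show ?thesis using m by blast
qed

lemma ex_meet_irreducible_ge_not_ge:
  fixes x y :: "'a::{finite,lattice}"
  assumes "\<not> y \<le> x"
  shows "\<exists>m. meet_irreducible m \<and> x \<le> m \<and> \<not> y \<le> m"
proof -
  obtain m where m: "x \<le> m" "\<not> y \<le> m" and max: "\<And>b. x \<le> b \<Longrightarrow> \<not> y \<le> b \<Longrightarrow> m \<le> b \<Longrightarrow> m = b"
    using finite_has_maximal[of "{m. x \<le> m \<and> \<not> y \<le> m}"] assms by auto
  have "meet_irreducible m"
    unfolding meet_irreducible_def
    by (metis m max le_inf_iff order.trans inf_le1 inf_le2)
  then show ?thesis using m by blast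
qed

lemma join_irreducible_le_lower_cover:
  fixes x :: "'a::{finite,lattice}"
  assumes "join_irreducible x" "covers y x" "w < x"
  shows "w \<le> y"
proof -
  obtain y' where "w \<le> y'" "covers y' x"
    using ex_le_covers_of_less[OF assms(3)] by blast
  moreover have "y' = y"
  proof (rule ccontr)
    assume "y' \<noteq> y"
    then have "x = sup y' y" using lower_covers_sup_eq[OF \<open>covers y' x\<close> assms(2)] by simp
    then have "x = y' \<or> x = y" using assms(1) unfolding join_irreducible_def by blast
    then show False using assms(2) \<open>covers y' x\<close> covers_lt by blast
  qed
  ultimately show ?thesis by simp
qed

lemma meet_irreducible_unique_upper_cover:
  fixes z :: "'a::lattice"
  assumes "meet_irreducible z" "covers z a" "covers z b"
  shows "a = b"
  using assms upper_covers_inf_eq[OF assms(2,3)] covers_lt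
  unfolding meet_irreducible_def by fastforce

lemma slim_no_three_upper_covers:
  fixes z :: "'a::{finite,lattice}"
  assumes slim: "slim_lattice TYPE('a)"
    and "covers z a" "covers z b" "covers z e" "a \<noteq> b" "a \<noteq> e" "b \<noteq> e"
  shows False
proof -
  have "\<exists>p. join_irreducible p \<and> p \<le> x \<and> \<not> p \<le> z" if "covers z x" for x
    using that by (intro ex_join_irreducible_le_not_le) (auto dest: covers_lt)
  then obtain a' b' e' where
    a': "join_irreducible a'" "a' \<le> a" "\<not> a' \<le> z" and
    b': "join_irreducible b'" "b' \<le> b" "\<not> b' \<le> z" and
    e': "join_irreducible e'" "e' \<le> e" "\<not> e' \<le> z"
    using assms(2-4) by meson
  have incomparable: "\<not> x' \<le> y' \<and> \<not> y' \<le> x'"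
    if "covers z x" "covers z y" "x \<noteq> y" "x' \<le> x" "y' \<le> y" "\<not> x' \<le> z" "\<not> y' \<le> z"
    for x y x' y'
    using that upper_covers_le[OF that(1-3), of x'] upper_covers_le[OF that(1-3), of y']
      order.trans[of x' y' y] order.trans[of y' x' x]
    by blast
  have "join_irreducible a' \<and> join_irreducible b' \<and> join_irreducible e'
      \<and> \<not> a' \<le> b' \<and> \<not> b' \<le> a' \<and> \<not> a' \<le> e' \<and> \<not> e' \<le> a' \<and> \<not> b' \<le> e' \<and> \<not> e' \<le> b'"
    using a' b' e' incomparable[OF assms(2,3,5) a'(2) b'(2) a'(3) b'(3)]
      incomparable[OF assms(2,4,6) a'(2) e'(2) a'(3) e'(3)]
      incomparable[OF assms(3,4,7) b'(2) e'(2) b'(3) e'(3)]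
    by blast
  then show False
    using slim unfolding slim_lattice_def by blast
qed

section \<open>Planar diagrams\<close>

lemma left_of_swap: "left_of r2 r1 x y \<longleftrightarrow> left_of r1 r2 y x"
  unfolding left_of_def by auto

lemma planar_diagram_swap: "planar_diagram r2 r1 \<longleftrightarrow> planar_diagram r1 r2"
  unfolding planar_diagram_def by auto

lemma linear_relD:
  assumes "linear_rel r"
  shows "r x y \<or> r y x" and "r x y \<Longrightarrow> r y x \<Longrightarrow> x = y" and "r x y \<Longrightarrow> r y z \<Longrightarrow> r x z"
  using assms unfolding linear_rel_def by blast+

lemma planar_diagramD:
  assumes "planar_diagram r1 r2"
  shows "linear_rel r1" "linear_rel r2" "x \<le> y \<longleftrightarrow> r1 x y \<and> r2 x y"
  using assms unfolding planar_diagram_def by blast+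

lemma left_of_incomparable:
  assumes "planar_diagram r1 r2" "left_of r1 r2 x y"
  shows "\<not> x \<le> y \<and> \<not> y \<le> x"
  using assms(2) planar_diagramD[OF assms(1)] linear_relD(2)[OF planar_diagramD(1)[OF assms(1)], of x y]
    linear_relD(2)[OF planar_diagramD(2)[OF assms(1)], of x y]
  unfolding left_of_def by blast

lemma incomparable_left_of:
  assumes "planar_diagram r1 r2" "\<not> x \<le> y" "\<not> y \<le> x"
  shows "left_of r1 r2 x y \<or> left_of r1 r2 y x"
  using assms(2,3) planar_diagramD(3)[OF assms(1)] linear_relD(1)[OF planar_diagramD(1)[OF assms(1)], of x y]
    linear_relD(1)[OF planar_diagramD(2)[OF assms(1)], of x y]
  unfolding left_of_def by blast

lemma left_of_asym:
  assumes "planar_diagram r1 r2" "left_of r1 r2 x y"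
  shows "\<not> left_of r1 r2 y x"
  using assms(2) linear_relD(2)[OF planar_diagramD(1)[OF assms(1)], of x y]
  unfolding left_of_def by blast

lemma leftmost_le_left_of:
  assumes planar: "planar_diagram r1 r2" and leftmost: "\<forall>y. \<not> left_of r1 r2 y e"
    and "left_of r1 r2 x y" "e \<le> y"
  shows "e \<le> x"
proof (rule ccontr)
  assume "\<not> e \<le> x"
  moreover have "\<not> x \<le> e" using assms(3,4) left_of_incomparable[OF planar] order.trans by blast
  ultimately have "left_of r1 r2 e x"
    using incomparable_left_of[OF planar] leftmost by blast
  \<comment> \<open>in the second linear order x precedes e, e precedes y (as e \<le> y), and y precedes x\<close>
  then have "r2 x e" "r2 e y" "r2 y x" "x \<noteq> y"
    using assms(3,4) planar_diagramD(3)[OF planar] unfolding left_of_def by blast+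
  then show False
    using linear_relD(2,3)[OF planar_diagramD(2)[OF planar]] by metis
qed

lemma rightmost_le_right_of:
  assumes "planar_diagram r1 r2" "\<forall>y. \<not> left_of r1 r2 e y" "left_of r1 r2 x y" "e \<le> x"
  shows "e \<le> y"
  using leftmost_le_left_of[of r2 r1 e y x] assms by (simp add: left_of_swap planar_diagram_swap)

lemma left_of_if_leftmost_separates:
  assumes planar: "planar_diagram r1 r2" and "\<forall>y. \<not> left_of r1 r2 y e"
    and "e \<le> x" "\<not> e \<le> y" "\<not> y \<le> x"
  shows "left_of r1 r2 x y"
proof -
  have "\<not> x \<le> y" using assms(3,4) order.trans by blast
  then show ?thesis
    using incomparable_left_of[OF planar _ assms(5)] leftmost_le_left_of[OF planar assms(2) _ assms(3)] assms(4)
    by blast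
qed

lemma left_of_if_rightmost_separates:
  assumes "planar_diagram r1 r2" "\<forall>y. \<not> left_of r1 r2 e y"
    and "e \<le> y" "\<not> e \<le> x" "\<not> x \<le> y"
  shows "left_of r1 r2 x y"
  using left_of_if_leftmost_separates[of r2 r1 e y x] assms
  by (simp add: left_of_swap planar_diagram_swap)

lemma semimodular_sup_covers_or_eq:
  assumes "semimodular_lattice TYPE('a::lattice)" "covers (a::'a) b"
  shows "sup x a = sup x b \<or> covers (sup x a) (sup x b)"
  using assms unfolding semimodular_lattice_def covers_or_eq_def by (metis sup_commute)

lemma semimodular_covers_sup:
  assumes "semimodular_lattice TYPE('a::lattice)" "covers (a::'a) b" "a \<le> y" "\<not> b \<le> y"
  shows "covers y (sup y b)"
  using semimodular_sup_covers_or_eq[OF assms(1,2), of y] assms(3,4)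
  by (metis le_iff_sup sup_commute sup_ge2)

lemma covers_chain_less:
  assumes "\<forall>i<n. covers (f i) (f (Suc i))" "i < k" "k \<le> n"
  shows "f i < f k"
  using assms(2,3)
proof (induction i k rule: less_Suc_induct)
  case (1 i)
  then have "i < n" by simp
  then show ?case using assms(1) covers_lt by blast
next
  case (2 i j k)
  then have "j \<le> n" by simp
  with 2 show ?case by (blast intro: order.strict_trans)
qed

lemma covers_chain_le_iff:
  assumes "\<forall>i<n. covers (f i) (f (Suc i))" "i \<le> n" "k \<le> n"
  shows "f i \<le> f k \<longleftrightarrow> i \<le> k"
  using covers_chain_less[OF assms(1)] assms(2,3)
  by (metis le_less_linear less_imp_le order.order_iff_strict order.strict_implies_not_eq leD)

definition chain_rank :: "(nat \<Rightarrow> 'a::order) \<Rightarrow> nat \<Rightarrow> 'a \<Rightarrow> nat" where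
  "chain_rank f n x = Max {k. k \<le> n \<and> f k \<le> x}"

lemma
  assumes "f 0 \<le> x"
  shows chain_rank_le: "chain_rank f n x \<le> n"
    and chain_rank_below: "f (chain_rank f n x) \<le> x"
proof -
  have "chain_rank f n x \<in> {k. k \<le> n \<and> f k \<le> x}"
    unfolding chain_rank_def using assms by (intro Max_in) auto
  then show "chain_rank f n x \<le> n" "f (chain_rank f n x) \<le> x" by auto
qed

lemma le_chain_rank: "k \<le> n \<Longrightarrow> f k \<le> x \<Longrightarrow> k \<le> chain_rank f n x"
  unfolding chain_rank_def by (rule Max_ge) auto

lemma chain_rank_mono: "f 0 \<le> x \<Longrightarrow> x \<le> y \<Longrightarrow> chain_rank f n x \<le> chain_rank f n y"
  using chain_rank_le chain_rank_below le_chain_rank order.trans by metis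

lemma chain_rank_eqI:
  assumes chain: "\<forall>i<n. covers (f i) (f (Suc i))" and "k < n" "f k \<le> x" "\<not> f (Suc k) \<le> x"
  shows "chain_rank f n x = k"
proof -
  have "k \<le> chain_rank f n x" using le_chain_rank[of k n f x] assms(2,3) by simp
  have "f 0 \<le> f k" using covers_chain_le_iff[OF chain, of 0 k] assms(2) by simp
  then have f0: "f 0 \<le> x" using assms(3) by (rule order.trans)
  have "\<not> Suc k \<le> chain_rank f n x"
  proof
    assume "Suc k \<le> chain_rank f n x"
    then have "f (Suc k) \<le> f (chain_rank f n x)"
      using covers_chain_le_iff[OF chain, of "Suc k" "chain_rank f n x"] chain_rank_le[of f x n, OF f0] assms(2)
      by simp
    then show False using chain_rank_below[of f x n, OF f0] assms(4) order.trans by blast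
  qed
  then show ?thesis using \<open>k \<le> chain_rank f n x\<close> by simp
qed

lemma chain_rank_eq_iff:
  assumes chain: "\<forall>i<n. covers (f i) (f (Suc i))" and "f 0 \<le> x" "1 \<le> i" "i \<le> n"
  shows "chain_rank f n x = i - 1 \<longleftrightarrow> \<not> f i \<le> x \<and> (\<forall>k\<le>n. \<not> f k \<le> x \<longrightarrow> f i \<le> f k)"
    (is "?rank \<longleftrightarrow> ?least")
proof
  assume rank: ?rank
  have "\<not> f i \<le> x" using le_chain_rank[of i n f x] rank assms(3,4) by auto
  moreover have "f i \<le> f k" if "k \<le> n" "\<not> f k \<le> x" for k
  proof -
    have "\<not> k \<le> chain_rank f n x"
      using that chain_rank_below[of f x n, OF assms(2)] chain_rank_le[of f x n, OF assms(2)]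
        covers_chain_le_iff[OF chain, of k "chain_rank f n x"] order.trans by metis
    then show ?thesis using rank covers_chain_le_iff[OF chain] assms(4) that(1) by simp
  qed
  ultimately show ?least by blast
next
  assume least: ?least
  have "f (i - 1) \<le> x"
  proof (rule ccontr)
    assume "\<not> f (i - 1) \<le> x"
    then have "f i \<le> f (i - 1)" using least assms(4) by simp
    then show False using covers_chain_le_iff[OF chain, of i "i - 1"] assms(3,4) by (simp, linarith)
  qed
  then have "i - 1 \<le> chain_rank f n x" using le_chain_rank[of "i - 1" n f x] assms(4) by simp
  moreover have "\<not> i \<le> chain_rank f n x"
    using chain_rank_below[of f x n, OF assms(2)] chain_rank_le[of f x n, OF assms(2)] least
      covers_chain_le_iff[OF chain, of i "chain_rank f n x"] assms(4) order.trans by blast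
  ultimately show ?rank by simp
qed

lemma successively_upt:
  "(\<And>k. a \<le> k \<Longrightarrow> Suc k < b \<Longrightarrow> P k (Suc k)) \<Longrightarrow> successively P [a..<b]"
  unfolding successively_conv_nth by (simp add: add.commute)

lemma successively_remdups_adj_reflclp:
  "successively R\<^sup>=\<^sup>= xs \<Longrightarrow> successively R (remdups_adj xs)"
  by (induction xs rule: remdups_adj.induct) (auto simp: successively_Cons)

lemma successively_deterministic_eq:
  assumes deterministic: "\<And>x y z. R x y \<Longrightarrow> R x z \<Longrightarrow> y = z"
    and "successively R xs" "successively R ys" "xs \<noteq> []" "ys \<noteq> []" "hd xs = hd ys"
    and "\<nexists>y. R (last xs) y" "\<nexists>y. R (last ys) y"
  shows "xs = ys"
  using assms(2-)
proof (induction xs arbitrary: ys)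
  case Nil
  then show ?case by simp
next
  case (Cons x xs)
  obtain ys' where ys: "ys = x # ys'" using Cons.prems(4,5) by (cases ys) auto
  show ?case
  proof (cases "xs = []")
    case True
    then show ?thesis using Cons.prems(2,6) ys by (auto simp: successively_Cons)
  next
    case False
    then have "ys' \<noteq> []" using Cons.prems(1,7) ys by (auto simp: successively_Cons)
    then have "hd xs = hd ys'"
      using Cons.prems(1,2) ys False deterministic by (auto simp: successively_Cons)
    then show ?thesis
      using Cons.IH[of ys'] Cons.prems False \<open>ys' \<noteq> []\<close> ys by (simp add: successively_Cons)
  qed
qed

lemma four_cellD:
  assumes "four_cell r1 r2 z a b t"
  shows "covers z a" "covers a t" "covers z b" "covers b t" "left_of r1 r2 a b"
  using assms unfolding four_cell_def by blast+

lemma four_cell_inf_sup: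
  assumes "four_cell r1 r2 z a b t"
  shows "inf a b = z" "sup a b = t"
  using four_cellD[OF assms] upper_covers_inf_eq lower_covers_sup_eq
  unfolding left_of_def by blast+

text \<open>The region between the paths z < a < t and z < b < t is automatically empty: an element
  inside it lies above a third upper cover of z.\<close>
lemma four_cell_if_covers:
  fixes z :: "'a::{finite,lattice}"
  assumes slim: "slim_lattice TYPE('a)" and planar: "planar_diagram r1 r2"
    and "covers z a" "covers a t" "covers z b" "covers b t" "left_of r1 r2 a b"
  shows "four_cell r1 r2 z a b t"
proof -
  have "False" if inside: "z < x" "left_of r1 r2 a x" "left_of r1 r2 x b" for x
  proof -
    obtain y where "covers z y" "y \<le> x" using ex_covers_le_of_less[OF inside(1)] by blast
    moreover have "y \<noteq> a" "y \<noteq> b" "a \<noteq> b"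
      using calculation(2) left_of_incomparable[OF planar] inside(2,3) assms(7) unfolding left_of_def
      by auto
    ultimately show False using slim_no_three_upper_covers[OF slim assms(3,5)] by blast
  qed
  then show ?thesis unfolding four_cell_def using assms(3-7) by blast
qed

lemma traj_step_is_left_edge: "traj_step r1 r2 e e' \<Longrightarrow> is_left_edge_of_cell r1 r2 e"
  unfolding traj_step_def is_left_edge_of_cell_def by blast

lemma is_left_edge_of_cellE:
  assumes "is_left_edge_of_cell r1 r2 (x, y)"
  obtains w where "left_of r1 r2 x w" | w where "left_of r1 r2 y w"
  using assms four_cellD(5) unfolding is_left_edge_of_cell_def by blast

lemma trajectory_iff:
  "trajectory r1 r2 c i es \<longleftrightarrow> es \<noteq> [] \<and> hd es = (c (i - 1), c i)
     \<and> successively (traj_step r1 r2) es \<and> \<not> is_left_edge_of_cell r1 r2 (last es)"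
  unfolding trajectory_def successively_conv_nth by blast

section \<open>Coordinates from the boundary chains\<close>

locale slim_semimodular_diagram =
  fixes r1 r2 :: "'a::{finite,bounded_lattice} \<Rightarrow> 'a \<Rightarrow> bool" and c d :: "nat \<Rightarrow> 'a" and n :: nat
  assumes slim: "slim_lattice TYPE('a)" and semimodular: "semimodular_lattice TYPE('a)"
    and planar: "planar_diagram r1 r2"
    and left_boundary: "left_boundary_chain r1 r2 n c"
    and right_boundary: "right_boundary_chain r1 r2 n d"
begin

lemma c_0: "c 0 = bot" and c_n: "c n = top" and c_covers: "\<forall>i<n. covers (c i) (c (Suc i))"
  and c_leftmost: "i \<le> n \<Longrightarrow> \<forall>y. \<not> left_of r1 r2 y (c i)"
  using left_boundary unfolding left_boundary_chain_def by blast+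

lemma d_0: "d 0 = bot" and d_n: "d n = top" and d_covers: "\<forall>i<n. covers (d i) (d (Suc i))"
  and d_rightmost: "i \<le> n \<Longrightarrow> \<forall>y. \<not> left_of r1 r2 (d i) y"
  using right_boundary unfolding right_boundary_chain_def by blast+

lemma c_le_iff: "i \<le> n \<Longrightarrow> k \<le> n \<Longrightarrow> c i \<le> c k \<longleftrightarrow> i \<le> k"
  by (rule covers_chain_le_iff[OF c_covers])

lemma d_le_iff: "i \<le> n \<Longrightarrow> k \<le> n \<Longrightarrow> d i \<le> d k \<longleftrightarrow> i \<le> k"
  by (rule covers_chain_le_iff[OF d_covers])

abbreviation c_index :: "'a \<Rightarrow> nat" where "c_index \<equiv> chain_rank c n"
abbreviation d_index :: "'a \<Rightarrow> nat" where "d_index \<equiv> chain_rank d n"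

lemma c_index_le: "c_index x \<le> n" and c_c_index_le: "c (c_index x) \<le> x"
  using chain_rank_le[of c x n] chain_rank_below[of c x n] c_0 by simp_all

lemma d_index_le: "d_index x \<le> n" and d_d_index_le: "d (d_index x) \<le> x"
  using chain_rank_le[of d x n] chain_rank_below[of d x n] d_0 by simp_all

text \<open>A join-irreducible x off both boundary chains has a unique lower cover x', and joining x'
  with the next elements of the two chains yields upper covers of x' strictly to the left and to
  the right of x: three covers, contradicting slimness.\<close>
lemma join_irreducible_on_boundary:
  assumes "join_irreducible x"
  shows "\<exists>k\<le>n. x = c k \<or> x = d k"
proof (rule ccontr)
  assume "\<not> (\<exists>k\<le>n. x = c k \<or> x = d k)"
  then have off: "c k \<noteq> x" "d k \<noteq> x" if "k \<le> n" for k
    using that by auto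
  have "bot < x" using off(1)[OF le0] c_0 by (metis bot_least order.not_eq_order_implies_strict)
  then obtain x' where x': "covers x' x" using ex_le_covers_of_less by blast
  have x'x: "x' \<le> x" using covers_le[OF x'] .
  have below: "w \<le> x'" if "w \<le> x" "w \<noteq> x" for w
    using join_irreducible_le_lower_cover[OF assms x', of w] that order.not_eq_order_implies_strict by blast
  define a where "a = c_index x"
  define b where "b = d_index x"
  have "c a \<noteq> x" "d b \<noteq> x"
    using off c_index_le d_index_le unfolding a_def b_def by simp_all
  then have ca: "c a \<le> x'" and db: "d b \<le> x'"
    using below c_c_index_le[of x] d_d_index_le[of x] unfolding a_def b_def by blast+
  have "a < n"
    using \<open>c a \<noteq> x\<close> c_c_index_le[of x] c_index_le[of x] c_n top_le unfolding a_def
    by (metis le_neq_implies_less)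
  have "b < n"
    using \<open>d b \<noteq> x\<close> d_d_index_le[of x] d_index_le[of x] d_n top_le unfolding b_def
    by (metis le_neq_implies_less)
  have nca: "\<not> c (Suc a) \<le> x" using le_chain_rank[of "Suc a" n c x] \<open>a < n\<close> unfolding a_def by auto
  have ndb: "\<not> d (Suc b) \<le> x" using le_chain_rank[of "Suc b" n d x] \<open>b < n\<close> unfolding b_def by auto
  define p where "p = sup x' (c (Suc a))"
  define q where "q = sup x' (d (Suc b))"
  have cp: "c (Suc a) \<le> p" and dq: "d (Suc b) \<le> q" unfolding p_def q_def by simp_all
  have p: "covers x' p"
    unfolding p_def using semimodular_covers_sup[OF semimodular] c_covers \<open>a < n\<close> ca nca x'x
    by (meson order.trans)
  have q: "covers x' q"
    unfolding q_def using semimodular_covers_sup[OF semimodular] d_covers \<open>b < n\<close> db ndb x'x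
    by (meson order.trans)
  have "p \<noteq> x" "q \<noteq> x" using cp dq nca ndb by auto
  have "left_of r1 r2 p x"
    using left_of_if_leftmost_separates[OF planar c_leftmost[of "Suc a"] cp nca]
      upper_covers_incomparable[OF x' p] \<open>p \<noteq> x\<close> \<open>a < n\<close> by simp
  moreover have "left_of r1 r2 x q"
    using left_of_if_rightmost_separates[OF planar d_rightmost[of "Suc b"] dq ndb]
      upper_covers_incomparable[OF x' q] \<open>q \<noteq> x\<close> \<open>b < n\<close> by simp
  ultimately have "p \<noteq> q" using left_of_asym[OF planar] by blast
  then show False
    using slim_no_three_upper_covers[OF slim p x' q] \<open>p \<noteq> x\<close> \<open>q \<noteq> x\<close> by blast
qed

lemma sup_c_index_d_index: "sup (c (c_index x)) (d (d_index x)) = x"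
proof (rule antisym)
  show "sup (c (c_index x)) (d (d_index x)) \<le> x" by (simp add: c_c_index_le d_d_index_le)
  show "x \<le> sup (c (c_index x)) (d (d_index x))"
  proof (rule ccontr)
    assume "\<not> x \<le> sup (c (c_index x)) (d (d_index x))"
    then obtain y where y: "join_irreducible y" "y \<le> x" "\<not> y \<le> sup (c (c_index x)) (d (d_index x))"
      using ex_join_irreducible_le_not_le by blast
    then obtain k where "k \<le> n" "y = c k \<or> y = d k"
      using join_irreducible_on_boundary by blast
    then have "y \<le> c (c_index x) \<or> y \<le> d (d_index x)"
      using y(2) le_chain_rank[of k n c x] le_chain_rank[of k n d x]
        c_le_iff[OF _ c_index_le] d_le_iff[OF _ d_index_le]
      by auto
    then show False using y(3) by (meson le_supI1 le_supI2)
  qed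
qed

lemma c_index_mono: "x \<le> y \<Longrightarrow> c_index x \<le> c_index y"
  using chain_rank_mono[of c x y n] c_0 by simp

lemma d_index_mono: "x \<le> y \<Longrightarrow> d_index x \<le> d_index y"
  using chain_rank_mono[of d x y n] d_0 by simp

lemma le_if_index_le:
  assumes "c_index x \<le> c_index y" "d_index x \<le> d_index y"
  shows "x \<le> y"
proof -
  have "c (c_index x) \<le> y" "d (d_index x) \<le> y"
    using assms c_le_iff[OF c_index_le c_index_le] d_le_iff[OF d_index_le d_index_le]
      c_c_index_le d_d_index_le order.trans
    by blast+
  then show ?thesis using sup_c_index_d_index[of x] by (metis le_sup_iff)
qed

lemma left_of_index_le:
  assumes "left_of r1 r2 x y"
  shows "c_index y \<le> c_index x" "d_index x \<le> d_index y"
  using le_chain_rank[OF c_index_le] le_chain_rank[OF d_index_le]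
    leftmost_le_left_of[OF planar c_leftmost[OF c_index_le] assms c_c_index_le]
    rightmost_le_right_of[OF planar d_rightmost[OF d_index_le] assms d_d_index_le]
  by blast+

section \<open>Source cells of the grid congruence\<close>

definition eta :: "nat \<Rightarrow> nat \<Rightarrow> 'a" where
  "eta i j = sup (c i) (d j)"

lemma eta_0_right: "eta i 0 = c i" and eta_0_left: "eta 0 j = d j"
  unfolding eta_def by (simp_all add: c_0 d_0)

lemma eta_c_step: "k < n \<Longrightarrow> eta k j = eta (Suc k) j \<or> covers (eta k j) (eta (Suc k) j)"
  unfolding eta_def using semimodular_sup_covers_or_eq[OF semimodular] c_covers
  by (metis sup_commute)

lemma eta_d_step: "k < n \<Longrightarrow> eta i k = eta i (Suc k) \<or> covers (eta i k) (eta i (Suc k))"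
  unfolding eta_def using semimodular_sup_covers_or_eq[OF semimodular] d_covers by blast

lemma eta_mono: "i \<le> i' \<Longrightarrow> i' \<le> n \<Longrightarrow> j \<le> j' \<Longrightarrow> j' \<le> n \<Longrightarrow> eta i j \<le> eta i' j'"
  unfolding eta_def using c_le_iff d_le_iff by (meson order.trans sup_mono)

lemma eta_Suc_Suc:
  "p < n \<Longrightarrow> q < n \<Longrightarrow> eta (Suc p) (Suc q) = sup (eta (Suc p) q) (eta p (Suc q))"
  using eta_mono[of p "Suc p" "Suc q" "Suc q"] eta_mono[of "Suc p" "Suc p" q "Suc q"]
  unfolding eta_def by (simp add: sup_absorb1 le_supI1 le_supI2 antisym sup.assoc sup.left_commute)

lemma eta_eq_right:
  assumes "eta k j = eta k' j" "j \<le> j'" "j' \<le> n"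
  shows "eta k j' = eta k' j'"
proof -
  have "eta l j' = sup (eta l j) (d j')" for l
    using d_le_iff[of j j'] assms(2,3) unfolding eta_def by (simp add: sup_absorb2 sup_assoc)
  then show ?thesis using assms(1) by simp
qed

lemma eta_eq_up:
  assumes "eta k j = eta k j'" "k \<le> k'" "k' \<le> n"
  shows "eta k' j = eta k' j'"
proof -
  have "eta k' l = sup (c k') (eta k l)" for l
    using c_le_iff[of k k'] assms(2,3) unfolding eta_def by (simp add: sup_absorb1 sup_assoc[symmetric])
  then show ?thesis using assms(1) by simp
qed

definition source_column :: "nat \<Rightarrow> nat" where
  "source_column i = (LEAST j. eta (i - 1) j = eta i j)"

lemma source_column:
  assumes "1 \<le> i" "i \<le> n"
  shows "eta (i - 1) (source_column i) = eta i (source_column i)"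
    and "j < source_column i \<Longrightarrow> eta (i - 1) j \<noteq> eta i j"
    and "source_column i \<le> n"
    and "1 \<le> source_column i"
proof -
  have "eta (i - 1) n = eta i n" unfolding eta_def using d_n by simp
  then show "eta (i - 1) (source_column i) = eta i (source_column i)" "source_column i \<le> n"
    unfolding source_column_def by (auto intro: LeastI Least_le)
  show "j < source_column i \<Longrightarrow> eta (i - 1) j \<noteq> eta i j"
    unfolding source_column_def by (rule not_less_Least)
  have "c (i - 1) < c i" using covers_chain_less[OF c_covers, of "i - 1" i] assms by simp
  then have "eta (i - 1) 0 \<noteq> eta i 0" by (simp add: eta_0_right)
  then show "1 \<le> source_column i"
    using \<open>eta (i - 1) (source_column i) = eta i (source_column i)\<close> by (metis less_one not_less)
qed

lemma source_column_cell:
  assumes "1 \<le> i" "i \<le> n"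
  defines "j \<equiv> source_column i"
  shows "eta (i - 1) (j - 1) \<noteq> eta (i - 1) j" and "eta i (j - 1) = eta i j"
    and "covers (eta (i - 1) (j - 1)) (eta i (j - 1))"
proof -
  have j: "1 \<le> j" "j \<le> n" "eta (i - 1) j = eta i j"
    using source_column[OF assms(1,2)] unfolding j_def by auto
  show lower: "covers (eta (i - 1) (j - 1)) (eta i (j - 1))"
    using eta_c_step[of "i - 1" "j - 1"] source_column(2)[OF assms(1,2), of "j - 1"] assms(1,2) j(1)
    unfolding j_def by simp
  have "eta i (j - 1) \<le> eta (i - 1) j"
    using eta_mono[of i i "j - 1" j] j assms(2) by simp
  then have less: "eta (i - 1) (j - 1) < eta (i - 1) j"
    using covers_lt[OF lower] by simp
  then show "eta (i - 1) (j - 1) \<noteq> eta (i - 1) j" by simp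
  then have "covers (eta (i - 1) (j - 1)) (eta (i - 1) j)"
    using eta_d_step[of "j - 1" "i - 1"] j(1,2) by simp
  then show "eta i (j - 1) = eta i j"
    using covers_between[of "eta (i - 1) (j - 1)" "eta (i - 1) j" "eta i (j - 1)"] lower
      \<open>eta i (j - 1) \<le> eta (i - 1) j\<close> j(3) covers_lt by fastforce
qed

lemma source_cell_beta_D_iff:
  "source_cell (beta_D c d) i j \<longleftrightarrow>
     eta (i - 1) j = eta i j \<and> eta i (j - 1) = eta i j \<and> eta (i - 1) (j - 1) \<noteq> eta i j"
  unfolding source_cell_def beta_D_def eta_def by auto

lemma source_cell_iff_source_column:
  assumes "1 \<le> i" "i \<le> n" "1 \<le> j" "j \<le> n"
  shows "source_cell (beta_D c d) i j \<longleftrightarrow> j = source_column i"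
proof
  assume "source_cell (beta_D c d) i j"
  then have s: "eta (i - 1) j = eta i j" "eta i (j - 1) = eta i j" "eta (i - 1) (j - 1) \<noteq> eta i j"
    unfolding source_cell_beta_D_iff by auto
  have "source_column i \<le> j" unfolding source_column_def using s(1) by (rule Least_le)
  moreover have "\<not> source_column i \<le> j - 1"
  proof
    assume "source_column i \<le> j - 1"
    then have "eta (i - 1) (j - 1) = eta i (j - 1)"
      using eta_eq_right[OF source_column(1)[OF assms(1,2)]] assms by simp
    then show False using s by simp
  qed
  ultimately show "j = source_column i" by simp
next
  assume "j = source_column i"
  then show "source_cell (beta_D c d) i j"
    unfolding source_cell_beta_D_iff
    using source_column[OF assms(1,2)] source_column_cell[OF assms(1,2)] covers_lt by fastforce
qed

definition source_graph :: "(nat \<times> nat) set" where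
  "source_graph = {(i, source_column i) |i. i \<in> {1..n}}"

lemma pi3_eq_source_graph: "pi3 n c d = source_graph"
  unfolding pi3_def source_graph_def
  using source_cell_iff_source_column source_column(3,4) by fastforce

lemma pi2_iff:
  "(i, j) \<in> pi2 n c d \<longleftrightarrow> i \<in> {1..n} \<and> j \<in> {1..n}
     \<and> (\<exists>u. meet_irreducible u \<and> c_index u = i - 1 \<and> d_index u = j - 1)"
proof -
  have "c_index u = i - 1 \<longleftrightarrow> \<not> c i \<le> u \<and> (\<forall>k\<le>n. \<not> c k \<le> u \<longrightarrow> c i \<le> c k)"
    if "i \<in> {1..n}" for u
    using chain_rank_eq_iff[OF c_covers, of u i] that c_0 by simp
  moreover have "d_index u = j - 1 \<longleftrightarrow> \<not> d j \<le> u \<and> (\<forall>k\<le>n. \<not> d k \<le> u \<longrightarrow> d j \<le> d k)"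
    if "j \<in> {1..n}" for u
    using chain_rank_eq_iff[OF d_covers, of u j] that d_0 by simp
  moreover have "u \<noteq> top" if "c_index u = i - 1" "i \<in> {1..n}" for u
    using that le_chain_rank[of n n c top] by auto
  ultimately show ?thesis unfolding pi2_def by blast
qed

text \<open>A meet-irreducible element has a single upper cover, which forces the grid square
  below (i, j) to be a source cell.\<close>
lemma source_cell_if_meet_irreducible:
  assumes "i \<in> {1..n}" "j \<in> {1..n}" "meet_irreducible u" "c_index u = i - 1" "d_index u = j - 1"
  shows "source_cell (beta_D c d) i j"
proof -
  have bounds: "i - 1 < n" "j - 1 < n" using assms(1,2) by auto
  have u: "u = eta (i - 1) (j - 1)"
    using sup_c_index_d_index[of u] assms(4,5) unfolding eta_def by simp
  have "\<not> c i \<le> u" "\<not> d j \<le> u"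
    using le_chain_rank[of i n c u] le_chain_rank[of j n d u] assms by auto
  then have "eta i (j - 1) \<noteq> u" "eta (i - 1) j \<noteq> u"
    unfolding eta_def by (metis sup_ge1 sup_ge2)+
  then have cover1: "covers u (eta i (j - 1))" and cover2: "covers u (eta (i - 1) j)"
    using eta_c_step[of "i - 1" "j - 1"] eta_d_step[of "j - 1" "i - 1"] assms(1,2) u by auto
  have "eta i (j - 1) = eta (i - 1) j"
    using meet_irreducible_unique_upper_cover[OF assms(3) cover1 cover2] .
  moreover have "eta i j = sup (eta i (j - 1)) (eta (i - 1) j)"
    using eta_Suc_Suc[OF bounds] assms(1,2) by simp
  ultimately show ?thesis
    unfolding source_cell_beta_D_iff using u covers_lt[OF cover1] by simp
qed

lemma meet_irreducible_if_source_cell: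
  assumes "i \<in> {1..n}" "j \<in> {1..n}" "source_cell (beta_D c d) i j"
  shows "\<exists>u. meet_irreducible u \<and> c_index u = i - 1 \<and> d_index u = j - 1"
proof -
  have bounds: "i - 1 < n" "j - 1 < n" using assms(1,2) by auto
  have s: "eta (i - 1) j = eta i j" "eta i (j - 1) = eta i j" "eta (i - 1) (j - 1) \<noteq> eta i j"
    using assms(3) unfolding source_cell_beta_D_iff by auto
  have "eta (i - 1) (j - 1) \<le> eta i j" using eta_mono assms(1,2) by simp
  with s(3) have "\<not> eta i j \<le> eta (i - 1) (j - 1)" by simp
  then obtain u where u: "meet_irreducible u" "eta (i - 1) (j - 1) \<le> u" "\<not> eta i j \<le> u"
    using ex_meet_irreducible_ge_not_ge by blast
  have "c (i - 1) \<le> u" "d (j - 1) \<le> u" using u(2) unfolding eta_def by simp_all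
  moreover have "\<not> c i \<le> u" "\<not> d j \<le> u"
    using u(3) s(1,2) calculation unfolding eta_def by (metis le_sup_iff)+
  ultimately have "c_index u = i - 1" "d_index u = j - 1"
    using chain_rank_eqI[OF c_covers bounds(1), of u] chain_rank_eqI[OF d_covers bounds(2), of u] assms(1,2)
    by simp_all
  with u(1) show ?thesis by blast
qed

lemma pi2_eq_pi3: "pi2 n c d = pi3 n c d"
  unfolding set_eq_iff pi3_def
  using pi2_iff source_cell_if_meet_irreducible meet_irreducible_if_source_cell by fast

section \<open>Trajectories in the diagram\<close>

lemma four_cell_lower_left_edge_unique:
  assumes "four_cell r1 r2 z a b t" "four_cell r1 r2 z a b' t'"
  shows "b' = b \<and> t' = t"
proof -
  have "b' = b"
    using slim_no_three_upper_covers[OF slim four_cellD(1,3)[OF assms(1)] four_cellD(3)[OF assms(2)]]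
      four_cellD(5)[OF assms(1)] four_cellD(5)[OF assms(2)] unfolding left_of_def by blast
  then show ?thesis using four_cell_inf_sup(2)[OF assms(1)] four_cell_inf_sup(2)[OF assms(2)] by simp
qed

lemma four_cell_upper_left_edge_unique_if_index_le:
  assumes cell: "four_cell r1 r2 z a b t" and cell': "four_cell r1 r2 z' a b' t"
    and "c_index b' \<le> c_index b"
  shows "z' = z \<and> b' = b"
proof -
  have "z' \<le> a" "z' \<le> b'" using covers_le four_cellD(1,3)[OF cell'] by auto
  then have "z' \<le> b"
    using le_if_index_le assms(3) c_index_mono d_index_mono left_of_index_le(2)[OF four_cellD(5)[OF cell]]
    by (meson order.trans)
  then have "z' \<le> z" using \<open>z' \<le> a\<close> four_cell_inf_sup(1)[OF cell] by (metis le_inf_iff)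
  then have "z' = z"
    using covers_between[OF four_cellD(1)[OF cell'], of z] four_cellD(1)[OF cell] covers_lt
    by (metis less_imp_le order.irrefl)
  then show ?thesis
    using four_cell_lower_left_edge_unique[OF cell] cell' by blast
qed

lemma four_cell_upper_left_edge_unique:
  assumes "four_cell r1 r2 z a b t" "four_cell r1 r2 z' a b' t"
  shows "z' = z \<and> b' = b"
  using four_cell_upper_left_edge_unique_if_index_le[OF assms]
    four_cell_upper_left_edge_unique_if_index_le[OF assms(2,1)]
  by (metis nat_le_linear)

lemma four_cell_lower_left_not_upper_left:
  assumes cell: "four_cell r1 r2 z a b t" and cell': "four_cell r1 r2 z' z b' a"
  shows False
proof -
  have "z \<le> b" "b' \<le> a" using covers_le four_cellD(3)[OF cell] four_cellD(4)[OF cell'] by auto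
  have "c_index b' \<le> c_index b"
    using left_of_index_le(1)[OF four_cellD(5)[OF cell']] c_index_mono[OF \<open>z \<le> b\<close>] by simp
  moreover have "d_index b' \<le> d_index b"
    using left_of_index_le(2)[OF four_cellD(5)[OF cell]] d_index_mono[OF \<open>b' \<le> a\<close>] by simp
  ultimately have "b' \<le> b" by (rule le_if_index_le)
  then have "a \<le> b" using \<open>z \<le> b\<close> four_cell_inf_sup(2)[OF cell'] by (metis le_sup_iff)
  then show False using left_of_incomparable[OF planar four_cellD(5)[OF cell]] by simp
qed

lemma traj_step_unique:
  assumes "traj_step r1 r2 e e1" "traj_step r1 r2 e e2"
  shows "e1 = e2"
  using assms four_cell_lower_left_edge_unique four_cell_upper_left_edge_unique
    four_cell_lower_left_not_upper_left four_cell_inf_sup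
  unfolding traj_step_def by (smt (verit) prod.inject)

lemma trajectory_unique:
  assumes "trajectory r1 r2 c i xs" "trajectory r1 r2 c i ys"
  shows "xs = ys"
  using assms unfolding trajectory_iff
  by (intro successively_deterministic_eq[of "traj_step r1 r2", OF traj_step_unique])
    (auto dest: traj_step_is_left_edge)

lemma d_edge_not_left_edge:
  "1 \<le> j \<Longrightarrow> j \<le> n \<Longrightarrow> \<not> is_left_edge_of_cell r1 r2 (d (j - 1), d j)"
  using d_rightmost[of j] d_rightmost[of "j - 1"] by (auto elim: is_left_edge_of_cellE)

lemma grid_four_cell:
  assumes "p < n" "q < n"
    and "eta p q \<noteq> eta (Suc p) q" "eta p q \<noteq> eta p (Suc q)" "eta (Suc p) q \<noteq> eta p (Suc q)"
  shows "four_cell r1 r2 (eta p q) (eta (Suc p) q) (eta p (Suc q)) (eta (Suc p) (Suc q))"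
proof -
  have za: "covers (eta p q) (eta (Suc p) q)" using eta_c_step[OF assms(1), of q] assms(3) by simp
  have zb: "covers (eta p q) (eta p (Suc q))" using eta_d_step[OF assms(2), of p] assms(4) by simp
  have "\<not> eta (Suc p) q \<le> eta p (Suc q)" "\<not> eta p (Suc q) \<le> eta (Suc p) q"
    using upper_covers_incomparable[OF za zb] upper_covers_incomparable[OF zb za] assms(5) by auto
  moreover have t: "eta (Suc p) (Suc q) = sup (eta (Suc p) q) (eta p (Suc q))"
    using eta_Suc_Suc[OF assms(1,2)] .
  ultimately have "eta (Suc p) q \<noteq> eta (Suc p) (Suc q)" "eta p (Suc q) \<noteq> eta (Suc p) (Suc q)"
    by (metis sup_ge1 sup_ge2)+
  then have at: "covers (eta (Suc p) q) (eta (Suc p) (Suc q))"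
    and bt: "covers (eta p (Suc q)) (eta (Suc p) (Suc q))"
    using eta_d_step[OF assms(2), of "Suc p"] eta_c_step[OF assms(1), of "Suc q"] by auto
  have "\<not> c (Suc p) \<le> eta p (Suc q)"
  proof
    assume "c (Suc p) \<le> eta p (Suc q)"
    moreover have "d q \<le> eta p (Suc q)"
      using d_le_iff[of q "Suc q"] assms(2) unfolding eta_def by (simp add: le_supI2)
    ultimately have "eta (Suc p) q \<le> eta p (Suc q)" unfolding eta_def by simp
    then show False using \<open>\<not> eta (Suc p) q \<le> eta p (Suc q)\<close> by simp
  qed
  then have "left_of r1 r2 (eta (Suc p) q) (eta p (Suc q))"
    using left_of_if_leftmost_separates[OF planar c_leftmost[of "Suc p"]] assms(1)
      \<open>\<not> eta p (Suc q) \<le> eta (Suc p) q\<close> unfolding eta_def by simp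
  then show ?thesis using four_cell_if_covers[OF slim planar za at zb bt] by simp
qed

definition c_edge :: "nat \<Rightarrow> nat \<Rightarrow> 'a \<times> 'a" where
  "c_edge i j = (eta (i - 1) j, eta i j)"

definition d_edge :: "nat \<Rightarrow> nat \<Rightarrow> 'a \<times> 'a" where
  "d_edge i j = (eta i (j - 1), eta i j)"

lemma c_edge_step:
  assumes "1 \<le> i" "i \<le> n" "Suc k < source_column i"
  shows "(traj_step r1 r2)\<^sup>=\<^sup>= (c_edge i k) (c_edge i (Suc k))"
proof (cases "c_edge i k = c_edge i (Suc k)")
  case False
  have bounds: "i - 1 < n" "k < n" "Suc (i - 1) = i"
    using assms source_column(3)[OF assms(1,2)] by auto
  have lower: "eta (i - 1) k \<noteq> eta i k" and upper: "eta (i - 1) (Suc k) \<noteq> eta i (Suc k)"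
    using source_column(2)[OF assms(1,2)] assms(3) by auto
  have t: "eta i (Suc k) = sup (eta i k) (eta (i - 1) (Suc k))"
    using eta_Suc_Suc[OF bounds(1,2)] bounds(3) by simp
  have "eta i k \<noteq> eta (i - 1) (Suc k)" using t upper by auto
  moreover have "eta (i - 1) k \<noteq> eta (i - 1) (Suc k)"
    using t False eta_mono[of "i - 1" i k k] bounds unfolding c_edge_def by (auto simp: sup_absorb1)
  ultimately have "four_cell r1 r2 (eta (i - 1) k) (eta i k) (eta (i - 1) (Suc k)) (eta i (Suc k))"
    using grid_four_cell[OF bounds(1,2)] lower bounds(3) by simp
  then show ?thesis unfolding c_edge_def traj_step_def by blast
qed simp

lemma d_edge_nontrivial:
  assumes "1 \<le> i" "i \<le> n" "m < i"
  shows "eta m (source_column i - 1) \<noteq> eta m (source_column i)"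
proof
  have "m \<le> i - 1" "i - 1 \<le> n" using assms by auto
  moreover assume "eta m (source_column i - 1) = eta m (source_column i)"
  ultimately show False
    using eta_eq_up source_column_cell(1)[OF assms(1,2)] by blast
qed

lemma d_edge_step:
  assumes "1 \<le> i" "i \<le> n" "Suc k < i"
  shows "(traj_step r1 r2)\<^sup>=\<^sup>= (d_edge (Suc k) (source_column i)) (d_edge k (source_column i))"
proof (cases "d_edge (Suc k) (source_column i) = d_edge k (source_column i)")
  case False
  define j where "j = source_column i - 1"
  have bounds: "k < n" "j < n" "Suc j = source_column i"
    using assms source_column(3,4)[OF assms(1,2)] unfolding j_def by auto
  have right: "eta k j \<noteq> eta k (Suc j)" and left: "eta (Suc k) j \<noteq> eta (Suc k) (Suc j)"
    using d_edge_nontrivial[OF assms(1,2)] assms(3) bounds(3) unfolding j_def by auto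
  have t: "eta (Suc k) (Suc j) = sup (eta (Suc k) j) (eta k (Suc j))"
    using eta_Suc_Suc[OF bounds(1,2)] .
  have "eta (Suc k) j \<noteq> eta k (Suc j)" using t left by auto
  moreover have "eta k j \<noteq> eta (Suc k) j"
    using t False eta_mono[of k k j "Suc j"] bounds unfolding d_edge_def j_def[symmetric]
    by (auto simp: sup_absorb2)
  ultimately have "four_cell r1 r2 (eta k j) (eta (Suc k) j) (eta k (Suc j)) (eta (Suc k) (Suc j))"
    using grid_four_cell[OF bounds(1,2)] right by simp
  then show ?thesis unfolding d_edge_def traj_step_def j_def[symmetric] bounds(3)[symmetric] by auto
qed simp

text \<open>The trajectory from the left boundary edge [c_(i-1), c_i] is the image under eta of the
  grid path that runs along row i up to the source cell and then descends along its column;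
  remdups_adj merges consecutive grid edges with the same image.\<close>
definition grid_trajectory :: "nat \<Rightarrow> ('a \<times> 'a) list" where
  "grid_trajectory i = remdups_adj
     (map (c_edge i) [0..<source_column i] @ map (\<lambda>k. d_edge k (source_column i)) (rev [0..<i]))"

lemma grid_trajectory:
  assumes "1 \<le> i" "i \<le> n"
  shows "trajectory r1 r2 c i (grid_trajectory i)"
    and "last (grid_trajectory i) = (d (source_column i - 1), d (source_column i))"
proof -
  define j where "j = source_column i"
  have j: "1 \<le> j" "j \<le> n" using source_column(3,4)[OF assms] unfolding j_def by auto
  have "successively (traj_step r1 r2)\<^sup>=\<^sup>= (map (c_edge i) [0..<j])"
    unfolding successively_map using c_edge_step[OF assms] j_def by (intro successively_upt) simp
  moreover have "successively (traj_step r1 r2)\<^sup>=\<^sup>= (map (\<lambda>k. d_edge k j) (rev [0..<i]))"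
    unfolding successively_map successively_rev using d_edge_step[OF assms] j_def
    by (intro successively_upt) simp
  moreover have "c_edge i (j - 1) = d_edge (i - 1) j"
    using source_column_cell(2)[OF assms] source_column(1)[OF assms]
    unfolding c_edge_def d_edge_def j_def by simp
  ultimately have "successively (traj_step r1 r2)\<^sup>=\<^sup>=
      (map (c_edge i) [0..<j] @ map (\<lambda>k. d_edge k j) (rev [0..<i]))"
    using j assms by (auto simp: successively_append_iff last_map hd_map hd_rev last_rev)
  then have "successively (traj_step r1 r2) (grid_trajectory i)"
    unfolding grid_trajectory_def j_def by (rule successively_remdups_adj_reflclp)
  moreover have "hd (grid_trajectory i) = (c (i - 1), c i)"
    using j unfolding grid_trajectory_def j_def[symmetric] by (simp add: c_edge_def eta_0_right upt_rec)
  moreover show last: "last (grid_trajectory i) = (d (source_column i - 1), d (source_column i))"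
    using assms j unfolding grid_trajectory_def j_def[symmetric]
    by (simp add: d_edge_def eta_0_left last_rev hd_map upt_rec)
  ultimately show "trajectory r1 r2 c i (grid_trajectory i)"
    unfolding trajectory_iff using d_edge_not_left_edge j unfolding grid_trajectory_def j_def by simp
qed

lemma pi1_eq_source_graph: "pi1 r1 r2 n c d = source_graph"
proof -
  have "(i, j) \<in> pi1 r1 r2 n c d \<longleftrightarrow> (i, j) \<in> source_graph" for i j
  proof
    assume "(i, j) \<in> pi1 r1 r2 n c d"
    then obtain es where i: "1 \<le> i" "i \<le> n" and j: "1 \<le> j" "j \<le> n"
      and es: "trajectory r1 r2 c i es" "last es = (d (j - 1), d j)"
      unfolding pi1_def by auto
    have "es = grid_trajectory i" using trajectory_unique[OF es(1) grid_trajectory(1)[OF i]] .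
    then have "d j = d (source_column i)" using es(2) grid_trajectory(2)[OF i] by simp
    then have "j = source_column i"
      using d_le_iff[of j "source_column i"] d_le_iff[of "source_column i" j] j(2) source_column(3)[OF i]
      by simp
    then show "(i, j) \<in> source_graph" unfolding source_graph_def using i by auto
  next
    assume "(i, j) \<in> source_graph"
    then have i: "1 \<le> i" "i \<le> n" and "j = source_column i" unfolding source_graph_def by auto
    then show "(i, j) \<in> pi1 r1 r2 n c d"
      unfolding pi1_def using grid_trajectory[OF i] source_column(3,4)[OF i] by auto
  qed
  then show ?thesis by auto
qed

end

theorem proposition2p7:
  fixes r1 r2 :: "'a::{finite,bounded_lattice} \<Rightarrow> 'a \<Rightarrow> bool"
    and c d :: "nat \<Rightarrow> 'a" and n :: nat
  assumes "slim_lattice TYPE('a)"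
    and "semimodular_lattice TYPE('a)"
    and "lattice_length TYPE('a) n"
    and "planar_diagram r1 r2"
    and "left_boundary_chain r1 r2 n c"
    and "right_boundary_chain r1 r2 n d"
  shows "pi1 r1 r2 n c d = pi2 n c d \<and> pi2 n c d = pi3 n c d"
proof -
  interpret slim_semimodular_diagram r1 r2 c d n
    using assms(1,2,4-6) by unfold_locales
  show ?thesis using pi1_eq_source_graph pi2_eq_pi3 pi3_eq_source_graph by simp
qed

end
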